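(* Let $\|\cdot\|_u$ be a unitarily-invariant norm on $\mathbb{M}_n(\mathbb{C})$, let $P\in\mathbb{M}_n(\mathbb{C})$ be an (orthogonal) projection and let $Q\in\mathbb{M}_n(\mathbb{C})$ be an idempotent ($Q^2=Q$). If $\|P\|_u=\|Q\|_u$ and $\|I_n-P\|_u=\|I_n-Q\|_u$, then $Q$ is an orthogonal projection (i.e. $Q=Q^*$).
   Context: A norm $\|\cdot\|_u$ on $\mathbb{M}_n(\mathbb{C})$ is unitarily-invariant if $\|UXV\|_u=\|X\|_u$ for all $X$ and all unitaries $U,V$. A projection means $P=P^2=P^*$. *)

theory Defs
  imports "HOL-Analysis.Analysis"
begin

definition cadj :: "complex ^'n^'m \<Rightarrow> complex ^'m^'n" where
  "cadj A = (\<chi> i j. cnj (A $ j $ i))"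

definition unitary_mat :: "complex ^'n^'n \<Rightarrow> bool" where
  "unitary_mat U \<longleftrightarrow> U ** cadj U = mat 1 \<and> cadj U ** U = mat 1"

definition is_matrix_norm :: "(complex ^'n^'n \<Rightarrow> real) \<Rightarrow> bool" where
  "is_matrix_norm N \<longleftrightarrow>
     (\<forall>X. 0 \<le> N X) \<and> (\<forall>X. N X = 0 \<longleftrightarrow> X = 0) \<and>
     (\<forall>c X. N ((\<chi> i j. c * X $ i $ j)) = cmod c * N X) \<and>
     (\<forall>X Y. N (X + Y) \<le> N X + N Y)"

definition unitarily_invariant_norm :: "(complex ^'n^'n \<Rightarrow> real) \<Rightarrow> bool" where
  "unitarily_invariant_norm N \<longleftrightarrow> is_matrix_norm N \<and>
     (\<forall>X U V. unitary_mat U \<longrightarrow> unitary_mat V \<longrightarrow> N (U ** X ** V) = N X)"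

definition orth_projection :: "complex ^'n^'n \<Rightarrow> bool" where
  "orth_projection P \<longleftrightarrow> P ** P = P \<and> cadj P = P"

end

theory Submission
  imports Defs
begin

(* Conjugating by unitaries turns P into a diagonal 0/1 projection P_T and Q into P_S + X, where
   P_S is the orthogonal projection onto the range of Q and the corner X maps the coordinates
   outside S into S.  Pinching a unitarily invariant norm down to one 2x2 block [[1, x], [0, 0]],
   whose singular values are sqrt (1 + |x|^2) and 0, shows that a nonzero corner strictly increases
   the norm: N (P_S + X) > N (P_S) and N (I - P_S - X) > N (P_(-S)).  As N (P_T) only grows with
   card T, the hypotheses would force card S < card T and card (- S) < card (- T), which is absurd.
   So X = 0, and Q is unitarily equivalent to P_S, hence self-adjoint. *)

definition cscale :: "complex \<Rightarrow> complex^'n^'m \<Rightarrow> complex^'n^'m" where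
  "cscale c X = (\<chi> i j. c * X $ i $ j)"

definition diag_mat :: "('n \<Rightarrow> complex) \<Rightarrow> complex^'n^'n" where
  "diag_mat d = (\<chi> i j. if i = j then d i else 0)"

definition coord_proj :: "'n set \<Rightarrow> complex^'n^'n" where
  "coord_proj S = diag_mat (\<lambda>i. if i \<in> S then 1 else 0)"

definition perm_mat :: "('n \<Rightarrow> 'n) \<Rightarrow> complex^'n^'n" where
  "perm_mat p = (\<chi> i j. if i = p j then 1 else 0)"

definition matrix_unit :: "'n \<Rightarrow> 'n \<Rightarrow> complex^'n^'n" where
  "matrix_unit a b = (\<chi> i j. if i = a \<and> j = b then 1 else 0)"

lemma matrix_mult_entry: "(A ** B) $ i $ j = (\<Sum>k\<in>UNIV. A $ i $ k * B $ k $ j)"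
  by (simp add: matrix_matrix_mult_def)

lemma cadj_entry [simp]: "cadj A $ i $ j = cnj (A $ j $ i)"
  by (simp add: cadj_def)

lemma cscale_entry [simp]: "cscale c X $ i $ j = c * X $ i $ j"
  by (simp add: cscale_def)

lemma diag_mat_entry [simp]: "diag_mat d $ i $ j = (if i = j then d i else 0)"
  by (simp add: diag_mat_def)

lemma coord_proj_entry: "coord_proj S $ i $ j = (if i = j \<and> i \<in> S then 1 else 0)"
  by (simp add: coord_proj_def)

lemma matrix_unit_entry: "matrix_unit a b $ i $ j = (if i = a \<and> j = b then 1 else 0)"
  by (simp add: matrix_unit_def)

lemma mat_entry [simp]: "mat k $ i $ j = (if i = j then k else 0)"
  by (simp add: mat_def)

lemma cadj_cadj [simp]: "cadj (cadj A) = A"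
  by (simp add: vec_eq_iff)

lemma cadj_mult: "cadj (A ** B) = cadj B ** cadj (A :: complex^'n^'n)"
  by (simp add: vec_eq_iff matrix_mult_entry mult.commute)

lemma cadj_add: "cadj (A + B) = cadj A + cadj B"
  by (simp add: vec_eq_iff)

lemma cadj_diff: "cadj (A - B) = cadj A - cadj B"
  by (simp add: vec_eq_iff)

lemma cadj_cscale: "cadj (cscale c X) = cscale (cnj c) (cadj X)"
  by (simp add: vec_eq_iff)

lemma cadj_mat [simp]: "cadj (mat 1 :: complex^'n^'n) = mat 1"
  by (simp add: vec_eq_iff)

lemma cadj_eq_0_iff [simp]: "cadj A = 0 \<longleftrightarrow> A = 0"
  by (metis cadj_cadj cadj_entry complex_cnj_zero vec_eq_iff zero_index)

lemma cadj_coord_proj [simp]: "cadj (coord_proj S) = coord_proj S"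
  by (simp add: vec_eq_iff coord_proj_entry)

lemma matrix_mult_add_right: "(A + B) ** C = A ** C + B ** (C :: complex^'n^'n)"
  by (simp add: vec_eq_iff matrix_mult_entry distrib_right sum.distrib)

lemma matrix_mult_diff_right: "(A - B) ** C = A ** C - B ** (C :: complex^'n^'n)"
  by (simp add: vec_eq_iff matrix_mult_entry left_diff_distrib sum_subtractf)

lemma matrix_mult_diff_left: "C ** (A - B) = C ** A - C ** (B :: complex^'n^'n)"
  by (simp add: vec_eq_iff matrix_mult_entry right_diff_distrib sum_subtractf)

lemma matrix_mult_uminus_left: "- A ** B = - (A ** B :: complex^'n^'n)"
  by (simp add: vec_eq_iff matrix_mult_entry sum_negf)

lemma matrix_mult_uminus_right: "A ** - B = - (A ** B :: complex^'n^'n)"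
  by (simp add: vec_eq_iff matrix_mult_entry sum_negf)

lemma diag_mat_mult_left: "diag_mat d ** A = (\<chi> i j. d i * A $ i $ j)"
  by (simp add: vec_eq_iff matrix_mult_entry if_distrib[of "\<lambda>x. x * _"] cong: if_cong)

lemma diag_mat_mult_right: "A ** diag_mat d = (\<chi> i j. A $ i $ j * d j)"
  by (simp add: vec_eq_iff matrix_mult_entry if_distrib[of "\<lambda>x. _ * x"] cong: if_cong)

lemma coord_proj_idem: "coord_proj S ** coord_proj S = coord_proj S"
  by (simp add: coord_proj_def diag_mat_mult_left vec_eq_iff)

lemma coord_proj_compl: "coord_proj (- S) = mat 1 - coord_proj S"
  by (simp add: vec_eq_iff coord_proj_entry)

lemma coord_proj_eq_0_iff: "coord_proj S = 0 \<longleftrightarrow> S = {}"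
  by (auto simp: vec_eq_iff coord_proj_entry)

lemma unitary_matI: "cadj U ** U = mat 1 \<Longrightarrow> unitary_mat (U :: complex^'n^'n)"
  by (simp add: unitary_mat_def matrix_left_right_inverse)

lemma unitary_mat_one: "unitary_mat (mat 1 :: complex^'n^'n)"
  by (simp add: unitary_mat_def)

lemma unitary_mat_cadj: "unitary_mat U \<Longrightarrow> unitary_mat (cadj U)"
  by (simp add: unitary_mat_def)

lemma unitary_mat_diag_mat: "(\<And>i. cmod (d i) = 1) \<Longrightarrow> unitary_mat (diag_mat d)"
  by (rule unitary_matI)
    (auto simp: vec_eq_iff diag_mat_mult_right complex_norm_square[symmetric] mult.commute)

definition sign_mat :: "'n set \<Rightarrow> complex^'n^'n" where
  "sign_mat T = diag_mat (\<lambda>i. if i \<in> T then 1 else - 1)"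

lemma unitary_mat_sign_mat: "unitary_mat (sign_mat T)"
  unfolding sign_mat_def by (rule unitary_mat_diag_mat) simp

lemma unitary_mat_perm_mat:
  assumes "bij p"
  shows "unitary_mat (perm_mat p)"
proof (rule unitary_matI)
  have "(\<Sum>k\<in>UNIV. cnj (if k = p a then 1 else 0) * (if k = p b then 1 else 0 :: complex))
          = (if a = b then 1 else 0)" for a b
    using bij_is_inj[OF assms]
    by (simp add: if_distrib[of "\<lambda>x. x * _"] inj_eq if_distrib[of cnj] cong: if_cong)
  then show "cadj (perm_mat p) ** perm_mat p = mat 1"
    by (simp add: vec_eq_iff matrix_mult_entry perm_mat_def)
qed

lemma perm_mat_conj_diag_mat:
  assumes "bij p"
  shows "perm_mat p ** diag_mat d ** cadj (perm_mat p) = diag_mat (d \<circ> inv p)"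
proof -
  have inv: "a = p k \<longleftrightarrow> k = inv p a" for a k
    using assms by (metis bij_inv_eq_iff)
  have "(\<Sum>k\<in>UNIV. (if a = p k then d k else 0) * cnj (if b = p k then 1 else 0))
          = (if a = b then d (inv p a) else 0)" for a b
    using inv bij_is_inj[OF bij_imp_bij_inv[OF assms]]
    by (simp add: if_distrib[of "\<lambda>x. x * _"] if_distrib[of cnj] inj_eq cong: if_cong)
  moreover have "perm_mat p ** diag_mat d = (\<chi> i j. if i = p j then d j else 0)"
    by (simp add: diag_mat_mult_right perm_mat_def vec_eq_iff)
  ultimately show ?thesis
    by (simp add: vec_eq_iff matrix_mult_entry perm_mat_def)
qed

lemma unitary_conj_inverse: "unitary_mat U \<Longrightarrow> U ** (cadj U ** A ** U) ** cadj U = A"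
  by (metis matrix_mul_assoc matrix_mul_lid matrix_mul_rid unitary_mat_def)

lemma unitary_conj_mat_one_minus:
  "unitary_mat U \<Longrightarrow> cadj U ** (mat 1 - A) ** U = mat 1 - cadj U ** A ** U"
  by (simp add: matrix_mult_diff_left matrix_mult_diff_right unitary_mat_def)

lemma coord_proj_image:
  assumes "bij p"
  shows "coord_proj (p ` S) = diag_mat ((\<lambda>i. if i \<in> S then 1 else 0) \<circ> inv p)"
proof -
  have "x \<in> p ` S \<longleftrightarrow> inv p x \<in> S" for x
    using assms by (metis bij_def bij_inv_eq_iff image_iff inj_image_mem_iff)
  then show ?thesis
    by (simp add: coord_proj_def o_def)
qed

lemma card_Compl: "card (- A) = CARD('a) - card (A :: 'a::finite set)"
  by (metis Compl_eq_Diff_UNIV card_Diff_subset finite top_greatest)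

lemma ex_bij_image_eq:
  fixes S T :: "'n::finite set"
  assumes "card S = card T"
  shows "\<exists>p. bij p \<and> p ` S = T"
proof -
  obtain f where f: "bij_betw f S T"
    using finite_same_card_bij[OF finite finite assms] by blast
  have "card (- S) = card (- T)"
    using assms by (simp add: card_Compl)
  then obtain g where g: "bij_betw g (- S) (- T)"
    using finite_same_card_bij[OF finite finite] by blast
  define p where "p x = (if x \<in> S then f x else g x)" for x
  have "bij_betw p S T"
    using f by (rule bij_betw_cong[THEN iffD1, rotated]) (simp add: p_def)
  moreover have "bij_betw p (- S) (- T)"
    using g by (rule bij_betw_cong[THEN iffD1, rotated]) (simp add: p_def)
  ultimately have "bij_betw p (S \<union> - S) (T \<union> - T)"
    by (rule bij_betw_combine) blast
  then show ?thesis
    using \<open>bij_betw p S T\<close> by (auto simp: bij_betw_def)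
qed

definition rotation_mat :: "'n \<Rightarrow> 'n \<Rightarrow> real \<Rightarrow> real \<Rightarrow> complex^'n^'n" where
  "rotation_mat i j c s = (\<chi> k l.
     if k = i then (if l = i then c else if l = j then - s else 0)
     else if k = j then (if l = i then s else if l = j then c else 0)
     else if k = l then 1 else 0)"

lemma sum_split_pair:
  fixes f :: "'n::finite \<Rightarrow> 'a::comm_monoid_add"
  assumes "i \<noteq> j"
  shows "(\<Sum>k\<in>UNIV. f k) = f i + f j + (\<Sum>k\<in>- {i, j}. f k)"
proof -
  have "(\<Sum>k\<in>UNIV. f k) = (\<Sum>k\<in>UNIV - {i, j}. f k) + (\<Sum>k\<in>{i, j}. f k)"
    by (rule sum.subset_diff) auto
  then show ?thesis
    using assms by (simp add: Compl_eq_Diff_UNIV ac_simps)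
qed

lemma unitary_mat_rotation_mat:
  assumes "i \<noteq> j" and "c\<^sup>2 + s\<^sup>2 = 1"
  shows "unitary_mat (rotation_mat i j c s)"
proof (rule unitary_matI)
  define Z where "Z = rotation_mat i j c s"
  have cs: "complex_of_real c * complex_of_real c + complex_of_real s * complex_of_real s = 1"
    using assms(2) by (metis of_real_1 of_real_add of_real_mult power2_eq_square)
  then have sc: "complex_of_real s * complex_of_real s + complex_of_real c * complex_of_real c = 1"
    by (simp add: add.commute)
  have "(cadj Z ** Z) $ k $ l = mat 1 $ k $ l" for k l
  proof -
    have "(\<Sum>m\<in>- {i, j}. cnj (Z $ m $ k) * Z $ m $ l) = (if k = l \<and> k \<notin> {i, j} then 1 else 0)"
      by (auto simp: Z_def rotation_mat_def if_distrib[of "\<lambda>x. x * _"] if_distrib[of cnj]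
          cong: if_cong)
    then show ?thesis
      unfolding matrix_mult_entry cadj_entry sum_split_pair[OF assms(1)]
      using assms(1) cs sc by (auto simp: Z_def rotation_mat_def mult.commute)
  qed
  then show "cadj (rotation_mat i j c s) ** rotation_mat i j c s = mat 1"
    by (simp add: Z_def vec_eq_iff)
qed

lemma coord_proj_add_matrix_unit_mult_rotation_mat:
  fixes t :: real
  assumes "i \<in> S" and "j \<notin> S" and r: "r = sqrt (1 + t\<^sup>2)"
  shows "(coord_proj S + cscale t (matrix_unit i j)) ** rotation_mat i j (1 / r) (t / r)
           = coord_proj S + cscale (r - 1) (coord_proj {i})"
proof -
  have "r > 0" and "r * r = 1 + t\<^sup>2"
    using r by (simp_all add: add_pos_nonneg)
  then have "1 / r + t * (t / r) = r"
    by (simp add: field_simps power2_eq_square)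
  then have r_eq: "complex_of_real (1 / r) + complex_of_real t * complex_of_real (t / r) = r"
    by (metis of_real_add of_real_mult)
  have "((coord_proj S + cscale t (matrix_unit i j)) ** rotation_mat i j (1 / r) (t / r)) $ k $ l
          = (coord_proj S + cscale (r - 1) (coord_proj {i})) $ k $ l" for k l
  proof -
    have "((coord_proj S + cscale t (matrix_unit i j)) ** rotation_mat i j (1 / r) (t / r)) $ k $ l
          = (if k \<in> S then rotation_mat i j (1 / r) (t / r) $ k $ l else 0)
            + (if k = i then t * rotation_mat i j (1 / r) (t / r) $ j $ l else 0)"
      by (simp add: matrix_mult_entry coord_proj_entry matrix_unit_entry sum.distrib distrib_right
          if_distrib[of "\<lambda>x. x * _"] if_distrib[of "\<lambda>x. _ * x"] cong: if_cong)
    then show ?thesis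
      using assms r_eq by (auto simp: coord_proj_entry rotation_mat_def)
  qed
  then show ?thesis
    by (simp add: vec_eq_iff)
qed

section \<open>Diagonalising orthogonal projections and idempotents\<close>

definition cinner :: "complex^'n \<Rightarrow> complex^'n \<Rightarrow> complex" where
  "cinner x y = (\<Sum>i\<in>UNIV. cnj (x $ i) * y $ i)"

definition orthonormal :: "(complex^'n) set \<Rightarrow> bool" where
  "orthonormal B \<longleftrightarrow> (\<forall>x\<in>B. \<forall>y\<in>B. cinner x y = (if x = y then 1 else 0))"

lemma cinner_zero_left [simp]: "cinner 0 y = 0"
  by (simp add: cinner_def)

lemma cinner_zero_right [simp]: "cinner x 0 = 0"
  by (simp add: cinner_def)

lemma cinner_diff_right: "cinner x (y - z) = cinner x y - cinner x z"
  by (simp add: cinner_def right_diff_distrib sum_subtractf)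

lemma cinner_scale_right: "cinner x (c *s y) = c * cinner x y"
  by (simp add: cinner_def sum_distrib_left mult_ac)

lemma cinner_scale_left: "cinner (c *s x) y = cnj c * cinner x y"
  by (simp add: cinner_def sum_distrib_left mult_ac)

lemma cinner_sum_right: "finite A \<Longrightarrow> cinner x (sum f A) = (\<Sum>a\<in>A. cinner x (f a))"
  by (simp add: cinner_def sum_component sum_distrib_left sum.swap[of _ A])

lemma cinner_commute: "cinner y x = cnj (cinner x y)"
  by (simp add: cinner_def mult.commute)

lemma cinner_cadj: "cinner x (A *v y) = cinner (cadj A *v x) y"
proof -
  have "cinner x (A *v y) = (\<Sum>i\<in>UNIV. \<Sum>j\<in>UNIV. cnj (x $ i) * A $ i $ j * y $ j)"
    by (simp add: cinner_def matrix_vector_mult_def sum_distrib_left mult_ac)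
  also have "\<dots> = (\<Sum>j\<in>UNIV. \<Sum>i\<in>UNIV. cnj (x $ i) * A $ i $ j * y $ j)"
    by (rule sum.swap)
  also have "\<dots> = cinner (cadj A *v x) y"
    by (simp add: cinner_def matrix_vector_mult_def sum_distrib_right sum_distrib_left mult_ac)
  finally show ?thesis .
qed

lemma cinner_self: "cinner x x = complex_of_real (\<Sum>i\<in>UNIV. (cmod (x $ i))\<^sup>2)"
  unfolding cinner_def of_real_sum complex_norm_square by (simp add: mult.commute)

lemma cinner_self_eq_0_iff: "cinner x x = 0 \<longleftrightarrow> x = 0"
proof
  assume "cinner x x = 0"
  then have "\<forall>i\<in>UNIV. (cmod (x $ i))\<^sup>2 = 0"
    unfolding cinner_self of_real_eq_0_iff by (simp add: sum_nonneg_eq_0_iff)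
  then show "x = 0"
    by (simp add: vec_eq_iff)
qed simp

lemma orthonormal_ex_orthogonal:
  assumes "finite B" and "orthonormal B" and "card (B :: (complex^'n) set) < CARD('n)"
  shows "\<exists>y. y \<noteq> 0 \<and> (\<forall>b\<in>B. cinner b y = 0)"
proof (rule ccontr)
  assume no_orth: "\<not> ?thesis"
  have "x \<in> vec.span B" for x
  proof -
    define y where "y = x - (\<Sum>b\<in>B. cinner b x *s b)"
    have "cinner b y = 0" if "b \<in> B" for b
      using assms(1,2) that
      by (simp add: y_def cinner_diff_right cinner_sum_right cinner_scale_right orthonormal_def
          if_distrib[of "\<lambda>z. _ * z"] cong: if_cong)
    then have "y = 0"
      using no_orth by blast
    then have "x = (\<Sum>b\<in>B. cinner b x *s b)"
      by (simp add: y_def)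
    also have "\<dots> \<in> vec.span B"
      by (intro vec.span_sum vec.span_scale vec.span_base)
    finally show ?thesis .
  qed
  then have "vec.dim (UNIV :: (complex^'n) set) \<le> card B"
    using vec.dim_le_card[OF _ \<open>finite B\<close>] by blast
  then show False
    using assms(3) by (simp add: card_cart_basis)
qed

definition proj_eigenbasis :: "complex^'n^'n \<Rightarrow> (complex^'n) set \<Rightarrow> bool" where
  "proj_eigenbasis G B \<longleftrightarrow>
     finite B \<and> orthonormal B \<and> (\<forall>b\<in>B. G *v b = b \<or> G *v b = 0)"

lemma proj_eigenbasis_extend:
  assumes "orth_projection G" and "proj_eigenbasis G B" and "card (B :: (complex^'n) set) < CARD('n)"
  shows "\<exists>B'. proj_eigenbasis G B' \<and> card B' = Suc (card B)"
proof -
  have B: "finite B" "orthonormal B" "\<forall>b\<in>B. G *v b = b \<or> G *v b = 0"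
    using assms(2) by (auto simp: proj_eigenbasis_def)
  obtain y where "y \<noteq> 0" and y_orth: "\<forall>b\<in>B. cinner b y = 0"
    using orthonormal_ex_orthogonal[OF B(1,2) assms(3)] by blast
  have "cinner b (G *v y) = 0" if "b \<in> B" for b
    using assms(1) B(3) y_orth that cinner_cadj[of b G y] by (force simp: orth_projection_def)
  moreover have "G *v (G *v y) = G *v y"
    using assms(1) by (simp add: matrix_vector_mul_assoc orth_projection_def)
  ultimately obtain z where z: "z \<noteq> 0" "\<forall>b\<in>B. cinner b z = 0" "G *v z = z \<or> G *v z = 0"
    using \<open>y \<noteq> 0\<close> y_orth by (cases "G *v y = 0") auto
  define \<sigma> where "\<sigma> = (\<Sum>i\<in>UNIV. (cmod (z $ i))\<^sup>2)"
  define w where "w = complex_of_real (1 / sqrt \<sigma>) *s z"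
  have z_norm: "cinner z z = complex_of_real \<sigma>"
    unfolding \<sigma>_def by (rule cinner_self)
  moreover have "\<sigma> \<ge> 0"
    unfolding \<sigma>_def by (simp add: sum_nonneg)
  ultimately have "\<sigma> > 0"
    using z(1) cinner_self_eq_0_iff[of z] by force
  then have "cinner w w = 1"
    by (simp add: w_def cinner_scale_left cinner_scale_right z_norm flip: of_real_mult)
  moreover have "\<forall>b\<in>B. cinner b w = 0" and "G *v w = w \<or> G *v w = 0"
    using z(2,3) by (auto simp: w_def cinner_scale_right vec.scale)
  moreover from calculation have "\<forall>b\<in>B. cinner w b = 0"
    by (metis cinner_commute complex_cnj_zero)
  ultimately have "proj_eigenbasis G (insert w B)" and "w \<notin> B"
    using B by (auto simp: proj_eigenbasis_def orthonormal_def)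
  then show ?thesis
    using B(1) by (intro exI[of _ "insert w B"]) simp
qed

lemma ex_proj_eigenbasis:
  assumes "orth_projection G" and "k \<le> CARD('n)"
  shows "\<exists>B. proj_eigenbasis (G :: complex^'n^'n) B \<and> card B = k"
  using assms(2)
proof (induction k)
  case 0
  have "proj_eigenbasis G {}"
    by (simp add: proj_eigenbasis_def orthonormal_def)
  then show ?case
    by (intro exI[of _ "{}"]) simp
next
  case (Suc k)
  then obtain B where "proj_eigenbasis G B" and "card B = k"
    by auto
  then show ?case
    using proj_eigenbasis_extend[OF assms(1)] Suc.prems by auto
qed

lemma orth_projection_unitarily_diagonal:
  assumes "orth_projection (G :: complex^'n^'n)"
  shows "\<exists>U S. unitary_mat U \<and> cadj U ** G ** U = coord_proj S"
proof -
  obtain B where "proj_eigenbasis G B" and "card B = CARD('n)"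
    using ex_proj_eigenbasis[OF assms] by blast
  then have B: "finite B" "orthonormal B" "\<forall>b\<in>B. G *v b = b \<or> G *v b = 0"
    by (auto simp: proj_eigenbasis_def)
  obtain f where f: "bij_betw f (UNIV :: 'n set) B"
    using finite_same_card_bij[OF finite B(1)] \<open>card B = CARD('n)\<close> by auto
  then have f_in: "f c \<in> B" and f_eq_iff: "f c = f d \<longleftrightarrow> c = d" for c d
    by (auto simp: bij_betw_def inj_on_def)
  define U where "U = (\<chi> r c. f c $ r)"
  define S where "S = {d. G *v f d = f d}"
  have "(cadj U ** U) $ c $ d = cinner (f c) (f d)" for c d
    by (simp add: matrix_mult_entry cinner_def U_def)
  then have "unitary_mat U"
    using B(2) f_in f_eq_iff by (intro unitary_matI) (auto simp: vec_eq_iff orthonormal_def)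
  moreover have "(cadj U ** G ** U) $ c $ d = cinner (f c) (G *v f d)" for c d
    by (simp add: matrix_mult_entry cinner_def U_def matrix_vector_mult_def sum_distrib_left
        sum_distrib_right mult_ac matrix_mul_assoc[symmetric])
  moreover have "cinner (f c) (G *v f d) = coord_proj S $ c $ d" for c d
    using B(2,3) f_in f_eq_iff
    by (cases "G *v f d = f d") (auto simp: coord_proj_entry S_def orthonormal_def cinner_def)
  ultimately show ?thesis
    by (metis vec_eq_iff)
qed

lemma idempotent_self_adjoint_part_invertible:
  assumes "Q ** Q = Q"
  shows "\<exists>B. B ** (Q + cadj Q - mat 1) = mat 1"
proof -
  have "x = 0" if "(Q + cadj Q - mat 1) *v x = 0" for x
  proof -
    have x: "Q *v x + cadj Q *v x = x"
      using that by (simp add: matrix_vector_mult_diff_rdistrib matrix_vector_mult_add_rdistrib)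
    then have "Q *v (Q *v x + cadj Q *v x) = Q *v x"
      by simp
    then have "Q *v x + Q *v (cadj Q *v x) = Q *v x"
      by (simp add: matrix_vector_right_distrib matrix_vector_mul_assoc assms)
    then have "Q *v (cadj Q *v x) = 0"
      by simp
    then have "cinner (cadj Q *v x) (cadj Q *v x) = 0"
      using cinner_cadj[of x Q "cadj Q *v x"] by simp
    then have "cadj Q *v x = 0"
      by (simp add: cinner_self_eq_0_iff)
    then have "cinner x x = 0"
      using x cinner_cadj[of x Q x] by simp
    then show "x = 0"
      by (simp add: cinner_self_eq_0_iff)
  qed
  then show ?thesis
    using matrix_left_invertible_ker by blast
qed

lemma idempotent_range_projection:
  assumes "Q ** Q = Q"
  shows "\<exists>R. orth_projection R \<and> R ** Q = Q \<and> Q ** R = R"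
proof -
  \<comment> \<open>\<open>M\<close> is self-adjoint and invertible, and \<open>Q M\<^sup>-\<^sup>1\<close> is the orthogonal projection
    onto the range of \<open>Q\<close>.\<close>
  define M where "M = Q + cadj Q - mat 1"
  obtain B where BM: "B ** M = mat 1"
    using idempotent_self_adjoint_part_invertible[OF assms] by (auto simp: M_def)
  then have MB: "M ** B = mat 1"
    using matrix_left_right_inverse by blast
  have "cadj M = M"
    by (simp add: M_def cadj_add cadj_diff)
  then have "cadj B = B"
    by (metis BM MB cadj_mat cadj_mult matrix_mul_assoc matrix_mul_lid matrix_mul_rid)
  have MQ: "M ** Q = cadj Q ** Q" and QM: "cadj Q ** M = cadj Q ** Q"
    using assms by (simp_all add: M_def matrix_add_ldistrib matrix_mult_add_right
        matrix_mult_diff_left matrix_mult_diff_right flip: cadj_mult)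
  have "B ** cadj Q = B ** cadj Q ** (M ** B)"
    using MB by simp
  also have "\<dots> = B ** (cadj Q ** M) ** B"
    by (simp add: matrix_mul_assoc)
  also have "\<dots> = (B ** M) ** Q ** B"
    using MQ QM by (metis matrix_mul_assoc)
  finally have BQ: "B ** cadj Q = Q ** B"
    using BM by simp
  define R where "R = Q ** B"
  have "cadj R = R"
    using BQ \<open>cadj B = B\<close> by (simp add: R_def cadj_mult)
  moreover have "R ** Q = Q"
    using BM MQ BQ by (metis R_def matrix_mul_assoc matrix_mul_lid)
  moreover have "Q ** R = R"
    using assms by (simp add: R_def matrix_mul_assoc)
  ultimately show ?thesis
    by (metis orth_projection_def matrix_mul_assoc)
qed

lemma idempotent_unitarily_corner:
  assumes "Q ** Q = Q"
  obtains U S where "unitary_mat U"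
    and "coord_proj S ** (cadj U ** Q ** U) = cadj U ** Q ** U"
    and "(cadj U ** Q ** U) ** coord_proj S = coord_proj S"
proof -
  obtain R where R: "orth_projection R" "R ** Q = Q" "Q ** R = R"
    using idempotent_range_projection[OF assms] by blast
  obtain U S where U: "unitary_mat U" "cadj U ** R ** U = coord_proj S"
    using orth_projection_unitarily_diagonal[OF R(1)] by blast
  have UU: "U ** cadj U = mat 1"
    using U(1) by (simp add: unitary_mat_def)
  have "coord_proj S ** (cadj U ** Q ** U) = cadj U ** (R ** Q) ** U"
    and "(cadj U ** Q ** U) ** coord_proj S = cadj U ** (Q ** R) ** U"
    by (simp_all flip: U(2) add: matrix_mul_assoc)
      (simp_all add: UU flip: matrix_mul_assoc)
  with that U(1) R(2,3) show ?thesis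
    by (simp add: U(2))
qed

section \<open>Unitarily invariant norms of coordinate projections\<close>

lemma coord_proj_add_diag:
  "coord_proj S + cscale b (coord_proj {x})
     = diag_mat (\<lambda>k. (if k \<in> S then 1 else 0) + (if k = x then b else 0))"
  by (auto simp: vec_eq_iff coord_proj_entry)

lemma sum_coord_proj_add_diag:
  "(\<Sum>x\<in>S. coord_proj S + cscale b (coord_proj {x})) = cscale (of_nat (card S) + b) (coord_proj S)"
proof -
  have "(\<Sum>x\<in>S. (coord_proj S + cscale b (coord_proj {x})) $ r $ c)
          = (of_nat (card S) + b) * coord_proj S $ r $ c" for r c
  proof -
    have "(coord_proj S + cscale b (coord_proj {x})) $ r $ c
            = coord_proj S $ r $ c + (if r = c then (if x = r then b else 0) else 0)" for x
      by (auto simp: coord_proj_entry)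
    then show ?thesis
      by (cases "r = c") (simp_all add: sum.distrib coord_proj_entry)
  qed
  then show ?thesis
    by (simp add: vec_eq_iff sum_component)
qed

definition pinch :: "'n set \<Rightarrow> complex^'n^'n \<Rightarrow> complex^'n^'n" where
  "pinch T A = (\<chi> a b. if (a \<in> T) = (b \<in> T) then A $ a $ b else 0)"

lemma pinch_eq_midpoint: "pinch T A = cscale (1/2) (A + sign_mat T ** A ** sign_mat T)"
  by (auto simp: vec_eq_iff pinch_def sign_mat_def diag_mat_mult_left diag_mat_mult_right)

lemma corner_support:
  assumes "coord_proj S ** X = X" and "X ** coord_proj S = 0" and "X $ a $ b \<noteq> 0"
  shows "a \<in> S" and "b \<notin> S"
proof -
  have "(coord_proj S ** X) $ a $ b = (if a \<in> S then X $ a $ b else 0)"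
    and "(X ** coord_proj S) $ a $ b = (if b \<in> S then X $ a $ b else 0)"
    by (simp_all add: coord_proj_def diag_mat_mult_left diag_mat_mult_right)
  then show "a \<in> S" and "b \<notin> S"
    using assms by (auto split: if_splits)
qed

lemma pinch_entry: "pinch T A $ a $ b = (if (a \<in> T) = (b \<in> T) then A $ a $ b else 0)"
  by (simp add: pinch_def)

lemma pinch_pinch_corner:
  assumes "coord_proj S ** X = X" and "X ** coord_proj S = 0" and "i \<in> S" and "j \<notin> S"
  shows "pinch (S \<union> {j}) (pinch {i, j} (coord_proj S + X))
           = coord_proj S + cscale (X $ i $ j) (matrix_unit i j)"
proof -
  have "pinch (S \<union> {j}) (pinch {i, j} (coord_proj S + X)) $ a $ b
          = (coord_proj S + cscale (X $ i $ j) (matrix_unit i j)) $ a $ b" for a b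
  proof (cases "X $ a $ b = 0")
    case True
    then show ?thesis
      by (auto simp: pinch_entry coord_proj_entry matrix_unit_entry)
  next
    case False
    then have "a \<in> S" "b \<notin> S"
      using corner_support[OF assms(1,2)] by blast+
    then show ?thesis
      using assms(3,4) by (auto simp: pinch_entry coord_proj_entry matrix_unit_entry)
  qed
  then show ?thesis
    by (simp add: vec_eq_iff)
qed

lemma coord_proj_add_matrix_unit_phase:
  assumes "j \<notin> S" and "x \<noteq> 0"
  shows "(coord_proj S + cscale x (matrix_unit i j))
           ** diag_mat (\<lambda>k. if k = j then cnj x / cmod x else 1)
         = coord_proj S + cscale (cmod x) (matrix_unit i j)"
  using assms
  by (auto simp: vec_eq_iff diag_mat_mult_right coord_proj_entry matrix_unit_entry
      complex_norm_square[symmetric] power2_eq_square)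

locale unitarily_invariant =
  fixes N :: "complex^'n^'n \<Rightarrow> real"
  assumes unitarily_invariant: "unitarily_invariant_norm N"
begin

lemma nonneg: "0 \<le> N X"
  and eq_0_iff: "N X = 0 \<longleftrightarrow> X = 0"
  and cscale: "N (cscale c X) = cmod c * N X"
  and triangle: "N (X + Y) \<le> N X + N Y"
  and unitary_mult: "unitary_mat U \<Longrightarrow> unitary_mat V \<Longrightarrow> N (U ** X ** V) = N X"
  using unitarily_invariant
  by (simp_all add: unitarily_invariant_norm_def is_matrix_norm_def cscale_def)

lemma unitary_mult_right: "unitary_mat V \<Longrightarrow> N (X ** V) = N X"
  using unitary_mult[of "mat 1" V X] unitary_mat_one by simp

lemma unitary_conj: "unitary_mat U \<Longrightarrow> N (cadj U ** X ** U) = N X"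
  by (simp add: unitary_mult unitary_mat_cadj)

lemma pos: "X \<noteq> 0 \<Longrightarrow> 0 < N X"
  using nonneg eq_0_iff by (metis order_le_less)

lemma sum_le: "finite F \<Longrightarrow> N (sum f F) \<le> (\<Sum>x\<in>F. N (f x))"
proof (induction F rule: finite_induct)
  case empty
  then show ?case using eq_0_iff[of 0] by simp
next
  case (insert x F)
  then show ?case using triangle[of "f x" "sum f F"] by simp
qed

lemma midpoint_le:
  "X = cscale (1/2) (A + B) \<Longrightarrow> N A \<le> N C \<Longrightarrow> N B \<le> N C \<Longrightarrow> N X \<le> N C"
  using cscale[of "1/2" "A + B"] triangle[of A B] by simp

lemma unitarily_invariant_cadj: "unitarily_invariant (\<lambda>X. N (cadj X))"
proof
  have "N (cadj (cscale c X)) = cmod c * N (cadj X)" for c X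
    by (simp add: cadj_cscale cscale)
  moreover have "N (cadj (U ** X ** V)) = N (cadj X)" if "unitary_mat U" "unitary_mat V" for U V X
    using that by (simp add: cadj_mult matrix_mul_assoc unitary_mult unitary_mat_cadj)
  ultimately show "unitarily_invariant_norm (\<lambda>X. N (cadj X))"
    using nonneg eq_0_iff triangle
    by (simp add: unitarily_invariant_norm_def is_matrix_norm_def cadj_add flip: cscale_def)
qed

lemma diag_mat_comp_perm: "bij p \<Longrightarrow> N (diag_mat (d \<circ> inv p)) = N (diag_mat d)"
  by (simp flip: perm_mat_conj_diag_mat add: unitary_mult unitary_mat_perm_mat unitary_mat_cadj)

lemma coord_proj_image_norm: "bij p \<Longrightarrow> N (coord_proj (p ` S)) = N (coord_proj S)"
  by (simp only: coord_proj_image diag_mat_comp_perm) (simp add: coord_proj_def)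

lemma coord_proj_mono:
  assumes "T \<subseteq> S"
  shows "N (coord_proj T) \<le> N (coord_proj S)"
proof -
  have "coord_proj T = cscale (1/2) (coord_proj S + coord_proj S ** sign_mat T)"
    using assms by (auto simp: vec_eq_iff coord_proj_def sign_mat_def diag_mat_mult_right)
  then show ?thesis
    by (auto intro: midpoint_le simp: unitary_mult_right unitary_mat_sign_mat)
qed

lemma coord_proj_card_mono:
  assumes "card T \<le> card S"
  shows "N (coord_proj T) \<le> N (coord_proj S)"
proof -
  obtain S' where "S' \<subseteq> S" "card S' = card T"
    using assms by (metis obtain_subset_with_card_n)
  moreover obtain p where "bij p" "p ` T = S'"
    using ex_bij_image_eq \<open>card S' = card T\<close> by metis
  ultimately show ?thesis
    using coord_proj_image_norm[of p T] coord_proj_mono by metis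
qed

lemma coord_proj_add_diag_norm_eq:
  assumes "i \<in> S" and "x \<in> S"
  shows "N (coord_proj S + cscale b (coord_proj {x})) = N (coord_proj S + cscale b (coord_proj {i}))"
proof -
  define d where "d x k = (if k \<in> S then 1 else 0) + (if k = x then b else 0)" for x k
  have "d x = d i \<circ> inv (Transposition.transpose i x)"
    using assms by (auto simp: d_def Transposition.transpose_def)
  then show ?thesis
    unfolding coord_proj_add_diag d_def[symmetric] by (simp only: diag_mat_comp_perm bij_transpose)
qed

lemma coord_proj_lt_add_diag:
  fixes a :: real
  assumes "i \<in> S" and "a > 0"
  shows "N (coord_proj S) < N (coord_proj S + cscale a (coord_proj {i}))"
proof -
  \<comment> \<open>The \<open>D x\<close> for \<open>x \<in> S\<close> all have the same norm and average to
    \<open>(1 + a / card S)\<close> times \<open>coord_proj S\<close>.\<close>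
  define D where "D x = coord_proj S + cscale a (coord_proj {x})" for x
  have "N (cscale (of_nat (card S) + a) (coord_proj S)) \<le> (\<Sum>x\<in>S. N (D x))"
    using sum_le[of S D] by (simp add: D_def sum_coord_proj_add_diag)
  also have "\<dots> = real (card S) * N (D i)"
    using coord_proj_add_diag_norm_eq[OF \<open>i \<in> S\<close>] by (simp add: D_def)
  finally have "N (cscale (of_nat (card S) + a) (coord_proj S)) \<le> real (card S) * N (D i)" .
  moreover have "of_nat (card S) + complex_of_real a = complex_of_real (real (card S) + a)"
    by simp
  ultimately have le: "(real (card S) + a) * N (coord_proj S) \<le> real (card S) * N (D i)"
    using \<open>a > 0\<close> by (metis cscale norm_of_real abs_of_pos add_nonneg_pos of_nat_0_le_iff)
  have "0 < a * N (coord_proj S)"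
    using \<open>i \<in> S\<close> \<open>a > 0\<close> by (intro mult_pos_pos pos) (auto simp: coord_proj_eq_0_iff)
  then have "real (card S) * N (coord_proj S) < real (card S) * N (D i)"
    using le by (simp add: distrib_right)
  then show ?thesis
    by (simp add: D_def mult_less_cancel_left)
qed

lemma pinch_le: "N (pinch T A) \<le> N A"
  by (rule midpoint_le[OF pinch_eq_midpoint]) (simp_all add: unitary_mult unitary_mat_sign_mat)

lemma coord_proj_lt_add_matrix_unit:
  fixes t :: real
  assumes "i \<in> S" and "j \<notin> S" and "t > 0"
  shows "N (coord_proj S) < N (coord_proj S + cscale t (matrix_unit i j))"
proof -
  define r where "r = sqrt (1 + t\<^sup>2)"
  have "i \<noteq> j"
    using assms by auto
  have "((1 / r)\<^sup>2 + (t / r)\<^sup>2) = 1"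
    using add_pos_nonneg[of 1 "t\<^sup>2"] by (simp add: r_def power_divide add_divide_distrib[symmetric])
  then have "N (coord_proj S + cscale t (matrix_unit i j)) = N (coord_proj S + cscale (r - 1) (coord_proj {i}))"
    using unitary_mult_right[OF unitary_mat_rotation_mat[OF \<open>i \<noteq> j\<close>]]
      coord_proj_add_matrix_unit_mult_rotation_mat[OF assms(1,2) r_def] by metis
  moreover have "r - 1 > 0"
    using \<open>t > 0\<close> by (simp add: r_def real_less_rsqrt)
  ultimately show ?thesis
    using coord_proj_lt_add_diag[OF \<open>i \<in> S\<close> \<open>r - 1 > 0\<close>] by simp
qed

lemma coord_proj_lt_add_corner:
  assumes "coord_proj S ** X = X" and "X ** coord_proj S = 0" and "X \<noteq> 0"
  shows "N (coord_proj S) < N (coord_proj S + X)"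
proof -
  obtain i j where "X $ i $ j \<noteq> 0"
    using \<open>X \<noteq> 0\<close> by (metis vec_eq_iff zero_index)
  with corner_support[OF assms(1,2)] have "i \<in> S" "j \<notin> S"
    by auto
  have "unitary_mat (diag_mat (\<lambda>k. if k = j then cnj (X $ i $ j) / cmod (X $ i $ j) else 1))"
    using \<open>X $ i $ j \<noteq> 0\<close> by (intro unitary_mat_diag_mat) (simp add: norm_divide)
  have "N (coord_proj S) < N (coord_proj S + cscale (cmod (X $ i $ j)) (matrix_unit i j))"
    using coord_proj_lt_add_matrix_unit[OF \<open>i \<in> S\<close> \<open>j \<notin> S\<close>] \<open>X $ i $ j \<noteq> 0\<close> by simp
  also have "\<dots> = N (coord_proj S + cscale (X $ i $ j) (matrix_unit i j))"
    using unitary_mult_right[OF \<open>unitary_mat _\<close>]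
    by (simp flip: coord_proj_add_matrix_unit_phase[OF \<open>j \<notin> S\<close> \<open>X $ i $ j \<noteq> 0\<close>])
  also have "\<dots> \<le> N (coord_proj S + X)"
    using pinch_le order_trans
    unfolding pinch_pinch_corner[OF assms(1,2) \<open>i \<in> S\<close> \<open>j \<notin> S\<close>, symmetric] by blast
  finally show ?thesis .
qed

lemma coord_proj_lt_add_lower_corner:
  assumes "X ** coord_proj S = X" and "coord_proj S ** X = 0" and "X \<noteq> 0"
  shows "N (coord_proj S) < N (coord_proj S + X)"
proof -
  \<comment> \<open>Taking adjoints swaps the two corners.\<close>
  interpret adjoint: unitarily_invariant "\<lambda>X. N (cadj X)"
    by (rule unitarily_invariant_cadj)
  have "coord_proj S ** cadj X = cadj X" and "cadj X ** coord_proj S = 0"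
    using assms(1,2) by (metis cadj_coord_proj cadj_mult cadj_eq_0_iff)+
  then show ?thesis
    using adjoint.coord_proj_lt_add_corner[of S "cadj X"] \<open>X \<noteq> 0\<close> by (simp add: cadj_add)
qed

lemma coord_proj_lt_corner:
  assumes "coord_proj S ** X = X" and "X ** coord_proj S = 0" and "X \<noteq> 0"
  shows "N (coord_proj S) < N (coord_proj S + X)"
    and "N (coord_proj (- S)) < N (mat 1 - (coord_proj S + X))"
proof -
  show "N (coord_proj S) < N (coord_proj S + X)"
    using coord_proj_lt_add_corner[OF assms] .
  have "- X ** coord_proj (- S) = - X" and "coord_proj (- S) ** - X = 0"
    using assms(1,2) by (simp_all add: coord_proj_compl matrix_mult_diff_left matrix_mult_diff_right
        matrix_mult_uminus_left matrix_mult_uminus_right)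
  then show "N (coord_proj (- S)) < N (mat 1 - (coord_proj S + X))"
    using coord_proj_lt_add_lower_corner[of "- X" "- S"] \<open>X \<noteq> 0\<close>
    by (simp add: coord_proj_compl diff_diff_eq)
qed

lemma coord_proj_not_both_lt:
  "\<not> (N (coord_proj S) < N (coord_proj T) \<and> N (coord_proj (- S)) < N (coord_proj (- T)))"
proof (cases "card T \<le> card S")
  case True
  then show ?thesis
    using coord_proj_card_mono by fastforce
next
  case False
  then have "card (- T) \<le> card (- S)"
    by (simp add: card_Compl)
  then show ?thesis
    using coord_proj_card_mono by fastforce
qed

end

theorem lemma2p3:
  fixes N :: "complex ^'n^'n \<Rightarrow> real" and P Q :: "complex ^'n^'n"
  assumes "unitarily_invariant_norm N"
    and "orth_projection P"
    and "Q ** Q = Q"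
    and "N P = N Q"
    and "N (mat 1 - P) = N (mat 1 - Q)"
  shows "cadj Q = Q"
proof -
  interpret unitarily_invariant N
    by (rule unitarily_invariant.intro) fact
  obtain U T where U: "unitary_mat U" "cadj U ** P ** U = coord_proj T"
    using orth_projection_unitarily_diagonal[OF assms(2)] by blast
  obtain V S where V: "unitary_mat V"
    and "coord_proj S ** (cadj V ** Q ** V) = cadj V ** Q ** V"
    and "(cadj V ** Q ** V) ** coord_proj S = coord_proj S"
    using idempotent_unitarily_corner[OF assms(3)] by blast
  moreover define X where "X = cadj V ** Q ** V - coord_proj S"
  ultimately have corner: "coord_proj S ** X = X" "X ** coord_proj S = 0"
    by (simp_all add: matrix_mult_diff_left matrix_mult_diff_right coord_proj_idem)
  have "X = 0"
  proof (rule ccontr)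
    assume "X \<noteq> 0"
    have "N (coord_proj S) < N (coord_proj T)" and "N (coord_proj (- S)) < N (coord_proj (- T))"
      using coord_proj_lt_corner[OF corner \<open>X \<noteq> 0\<close>] assms(4,5) U V(1)
        unitary_conj[OF U(1), of P] unitary_conj[OF U(1), of "mat 1 - P"]
        unitary_conj[OF V(1), of Q] unitary_conj[OF V(1), of "mat 1 - Q"]
      by (simp_all add: X_def unitary_conj_mat_one_minus coord_proj_compl)
    then show False
      using coord_proj_not_both_lt by blast
  qed
  then have "Q = V ** coord_proj S ** cadj V"
    using unitary_conj_inverse[OF V(1), of Q] by (simp add: X_def)
  then show ?thesis
    by (simp add: cadj_mult matrix_mul_assoc)
qed

end
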